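(* Let $\widetilde{C}_4$ be the infinite graph with vertex set $\{0,u,0',d\}\cup\{1,2,3,\dots\}\cup\{-1,-2,-3,\dots\}$ and edge set $\{\{0,u\},\{u,0'\},\{0',d\},\{d,0\}\}\cup\{\{n,n+1\}:n\ge1\}\cup\{\{-n,-n-1\}:n\ge1\}\cup\{\{0',-1\},\{0,1\}\}$. Let $U$ be the Grover walk operator on $\ell^2(A(\widetilde{C}_4))$, let $\Psi_0\in\ell^2(A(\widetilde{C}_4))$ with $\|\Psi_0\|=1$, let $\Psi_t=U^t\Psi_0$, and let $X_t$ be the $\mathbb{Z}$-valued random variable with $\mathbb{P}(X_t=j)=\sum_{v\in V_j}\mu_t(v)$, where $V_j=\{j\}$ for $j\neq0$ and $V_0=\{0,u,0',d\}$. Let $c=((0',u),(u,0),(0,d),(d,0'))$ and let $\bar c=((0',d),(d,0),(0,u),(u,0'))$ be the reversed cycle. For $m\in\{1,2,3,4\}$ put $\Gamma_m=\mathrm{span}\{w^{(m)}(c)-w^{(m)}(\bar c)\}$, and let $\Gamma=\Gamma_1+\Gamma_2+\Gamma_3+\Gamma_4$. Then localization occurs for the sequence of distributions of $X_t$ (that is, there is an integer $j$ with $\limsup_{t\to\infty}\mathbb{P}(X_t=j)>0$) if and only if $\Psi_0\notin\Gamma^{\perp}$.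
   Context: $A(G)=\{(u,v):\{u,v\}\in E(G)\}$ is the set of arcs of $G$; for $e=(u,v)$ write $o(e)=u$, $t(e)=v$ and $\bar e=(v,u)$. The Hilbert space $\ell^2(A(G))$ has the standard basis $\{\delta_e\}_{e\in A(G)}$. The Grover walk operator $U$ on $\ell^2(A(G))$ is defined by $$\langle\delta_f,U\delta_e\rangle=\Big(\tfrac{2}{\deg o(e)}-\delta_{e,\bar f}\Big)\mathbf 1_{\{o(e)=t(f)\}}.$$ The distribution at time $t$ is $\mu_t(v)=\sum_{e:\,o(e)=v}|\Psi_t(e)|^2$. For a path $p=(e_1,\dots,e_n)$ and $m\in\mathbb{N}$, set $w^{(m)}(p)=\sum_{j=1}^n e^{2\pi i m j/n}\delta_{e_j}$; here $n=4$. Localization of a sequence of distributions $\rho_t$ on $\mathbb{Z}$ means that there exists an integer $j$ with $\limsup_{t\to\infty}\rho_t(j)>0$. *)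

theory Defs
  imports "HOL-Analysis.Analysis" "HOL-Library.Liminf_Limsup"
begin

text \<open>Vertices of the graph C4-tilde: N j is the integer vertex j (N 0 is the vertex 0),
  Uv is u, Zp is 0', Dv is d.\<close>
datatype vert = N int | Uv | Zp | Dv

definition edges :: "vert set set" where
  "edges = {{N 0, Uv}, {Uv, Zp}, {Zp, Dv}, {Dv, N 0}}
     \<union> {{N n, N (n + 1)} | n. n \<ge> 1}
     \<union> {{N (- n), N (- n - 1)} | n. n \<ge> 1}
     \<union> {{Zp, N (-1)}, {N 0, N 1}}"

definition arcs :: "(vert \<times> vert) set" where
  "arcs = {(a, b). {a, b} \<in> edges}"

definition deg :: "vert \<Rightarrow> nat" where
  "deg v = card {w. {v, w} \<in> edges}"

definition grover :: "(vert \<times> vert \<Rightarrow> complex) \<Rightarrow> (vert \<times> vert \<Rightarrow> complex)" where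
  "grover \<psi> f = (if f \<in> arcs then
     (\<Sum>e\<in>{e \<in> arcs. fst e = snd f}.
        (complex_of_real (2 / real (deg (fst e))) - (if e = prod.swap f then 1 else 0)) * \<psi> e)
   else 0)"

definition mu :: "(vert \<times> vert \<Rightarrow> complex) \<Rightarrow> vert \<Rightarrow> real" where
  "mu \<psi> v = (\<Sum>e\<in>{e \<in> arcs. fst e = v}. (cmod (\<psi> e))\<^sup>2)"

definition Vset :: "int \<Rightarrow> vert set" where
  "Vset j = (if j = 0 then {N 0, Uv, Zp, Dv} else {N j})"

definition probX :: "(vert \<times> vert \<Rightarrow> complex) \<Rightarrow> int \<Rightarrow> real" where
  "probX \<psi> j = (\<Sum>v\<in>Vset j. mu \<psi> v)"

definition wvec :: "nat \<Rightarrow> (vert \<times> vert) list \<Rightarrow> (vert \<times> vert \<Rightarrow> complex)" where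
  "wvec m p = (\<lambda>e. \<Sum>j\<in>{1..length p}.
      (if p ! (j - 1) = e
       then exp (2 * pi * \<i> * of_nat m * of_nat j / of_nat (length p)) else 0))"

definition cyc :: "(vert \<times> vert) list" where
  "cyc = [(Zp, Uv), (Uv, N 0), (N 0, Dv), (Dv, Zp)]"

definition cycbar :: "(vert \<times> vert) list" where
  "cycbar = [(Zp, Dv), (Dv, N 0), (N 0, Uv), (Uv, Zp)]"

definition gvec :: "nat \<Rightarrow> (vert \<times> vert \<Rightarrow> complex)" where
  "gvec m = (\<lambda>e. wvec m cyc e - wvec m cycbar e)"

definition Gamma :: "(vert \<times> vert \<Rightarrow> complex) set" where
  "Gamma = {(\<lambda>e. \<Sum>m\<in>{1..4}. a m * gvec m e) | a :: nat \<Rightarrow> complex. True}"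

definition l2 :: "(vert \<times> vert \<Rightarrow> complex) set" where
  "l2 = {\<psi>. (\<forall>e. e \<notin> arcs \<longrightarrow> \<psi> e = 0) \<and> (\<lambda>e. (cmod (\<psi> e))\<^sup>2) summable_on arcs}"

definition l2norm :: "(vert \<times> vert \<Rightarrow> complex) \<Rightarrow> real" where
  "l2norm \<psi> = sqrt (infsum (\<lambda>e. (cmod (\<psi> e))\<^sup>2) arcs)"

definition l2inner :: "(vert \<times> vert \<Rightarrow> complex) \<Rightarrow> (vert \<times> vert \<Rightarrow> complex) \<Rightarrow> complex" where
  "l2inner \<phi> \<psi> = infsum (\<lambda>e. cnj (\<phi> e) * \<psi> e) arcs"

definition perp :: "(vert \<times> vert \<Rightarrow> complex) set \<Rightarrow> (vert \<times> vert \<Rightarrow> complex) set" where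
  "perp S = {\<psi> \<in> l2. \<forall>\<phi>\<in>S. l2inner \<phi> \<psi> = 0}"

end

theory Submission
  imports Defs
begin

text \<open>Let \<open>a\<^sub>j = \<psi>(c\<^sub>j) - \<psi>(cbar\<^sub>j)\<close> and \<open>s\<^sub>j = \<psi>(c\<^sub>j) + \<psi>(cbar\<^sub>j)\<close> be the parts of
  \<open>\<psi>\<close> on the 4-cycle that are odd and even under the symmetry swapping \<open>u\<close> and \<open>d\<close>.
  The inner products of \<open>\<psi>\<close> with the generators of \<open>\<Gamma>\<close> are the discrete Fourier transform
  of \<open>(a\<^sub>j)\<close>, so \<open>\<psi> \<in> \<Gamma>\<^sup>\<perp>\<close> iff all \<open>a\<^sub>j\<close> vanish. The walk shifts \<open>(a\<^sub>j)\<close>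
  cyclically, so \<open>\<Sum>|a\<^sub>j|\<^sup>2\<close> is conserved; as it is at most \<open>2 P(X\<^sub>t = 0)\<close>, the walk
  localizes when \<open>\<Psi>\<^sub>0 \<notin> \<Gamma>\<^sup>\<perp>\<close>. Conversely, if the \<open>a\<^sub>j\<close> vanish then every cycle
  amplitude is \<open>s\<^sub>j/2\<close>. Four steps contract \<open>s\<^sub>1\<close> and \<open>s\<^sub>3\<close> by \<open>1/9\<close> up to the inflow
  from the two rays, which tends to zero by square summability, and the amplitudes travelling
  outwards along the rays are delayed copies of those leaving the hubs \<open>0\<close> and \<open>0'\<close>.
  Hence every arc amplitude, and with it every \<open>P(X\<^sub>t = j)\<close>, tends to zero.\<close>

fun nbrs :: "vert \<Rightarrow> vert set" where
  "nbrs (N n) =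
     (if n = 0 then {Uv, Dv, N 1} else if n = -1 then {Zp, N (-2)} else {N (n - 1), N (n + 1)})"
| "nbrs Uv = {N 0, Zp}"
| "nbrs Zp = {Uv, Dv, N (-1)}"
| "nbrs Dv = {Zp, N 0}"

lemma edge_iff_nbrs: "{v, w} \<in> edges \<longleftrightarrow> w \<in> nbrs v"
  apply (cases v; cases w)
  apply (auto simp: edges_def doubleton_eq_iff)
  apply presburger+
  done

lemma arc_iff_nbrs: "(v, w) \<in> arcs \<longleftrightarrow> w \<in> nbrs v"
  by (simp add: arcs_def edge_iff_nbrs)

lemma nbrs_sym: "w \<in> nbrs v \<longleftrightarrow> v \<in> nbrs w"
  by (metis edge_iff_nbrs insert_commute)

lemma finite_nbrs [simp]: "finite (nbrs v)"
  by (cases v) auto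

lemma out_arcs_eq: "{e \<in> arcs. fst e = v} = Pair v ` nbrs v"
  by (auto simp: arc_iff_nbrs)

lemma deg_eq_card_nbrs: "deg v = card (nbrs v)"
  by (simp add: deg_def edge_iff_nbrs)

lemma mu_eq: "mu \<psi> v = (\<Sum>w\<in>nbrs v. (cmod (\<psi> (v, w)))\<^sup>2)"
  unfolding mu_def out_arcs_eq by (subst sum.reindex) (auto simp: inj_on_def)

definition out_sum :: "(vert \<times> vert \<Rightarrow> complex) \<Rightarrow> vert \<Rightarrow> complex" where
  "out_sum \<psi> v = (\<Sum>w\<in>nbrs v. \<psi> (v, w))"

lemma out_sum_hubs:
  "out_sum \<psi> (N 0) = \<psi> (N 0, Uv) + \<psi> (N 0, Dv) + \<psi> (N 0, N 1)"
  "out_sum \<psi> Zp = \<psi> (Zp, Uv) + \<psi> (Zp, Dv) + \<psi> (Zp, N (-1))"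
  by (simp_all add: out_sum_def add.assoc)

lemma grover_arc:
  assumes "v \<in> nbrs a"
  shows "grover \<psi> (a, v) = 2 / card (nbrs v) * out_sum \<psi> v - \<psi> (v, a)"
proof -
  have a: "a \<in> nbrs v" using assms nbrs_sym by blast
  have "grover \<psi> (a, v) =
      (\<Sum>w\<in>nbrs v. (2 / of_nat (card (nbrs v)) - (if w = a then 1 else 0)) * \<psi> (v, w))"
    unfolding grover_def out_arcs_eq using assms
    by (subst sum.reindex) (auto simp: inj_on_def arc_iff_nbrs deg_eq_card_nbrs)
  also have "\<dots> = 2 / card (nbrs v) * out_sum \<psi> v - (\<Sum>w\<in>nbrs v. if w = a then \<psi> (v, w) else 0)"
    unfolding out_sum_def sum_distrib_left sum_subtractf[symmetric]
    by (rule sum.cong) (auto simp: algebra_simps)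
  finally show ?thesis using a by simp
qed

lemma grover_transmit:
  assumes "nbrs v = {a, b}" "a \<noteq> b"
  shows "grover \<psi> (a, v) = \<psi> (v, b)"
  using assms by (subst grover_arc) (auto simp: out_sum_def nbrs_sym)

lemma grover_into_hub:
  assumes "v \<in> nbrs h" and "h = N 0 \<or> h = Zp"
  shows "grover \<psi> (v, h) = 2/3 * out_sum \<psi> h - \<psi> (h, v)"
  using assms by (subst grover_arc) (auto simp: nbrs_sym)

lemma grover_along_cycle:
  "grover \<psi> (N 0, Uv) = \<psi> (Uv, Zp)" "grover \<psi> (N 0, Dv) = \<psi> (Dv, Zp)"
  "grover \<psi> (Zp, Uv) = \<psi> (Uv, N 0)" "grover \<psi> (Zp, Dv) = \<psi> (Dv, N 0)"
  by (rule grover_transmit; auto)+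

text \<open>\<open>(U \<psi>)(a, v)\<close> is computed from the arcs leaving \<open>v\<close>, so amplitude moves against the
  direction of the arcs: arcs pointing away from the hubs carry amplitude towards them.\<close>
lemma grover_outward_arc:
  "n \<ge> 0 \<Longrightarrow> grover \<psi> (N n, N (n + 1)) = \<psi> (N (n + 1), N (n + 2))"
  "n \<le> -1 \<Longrightarrow> grover \<psi> (N n, N (n - 1)) = \<psi> (N (n - 1), N (n - 2))"
  "grover \<psi> (Zp, N (-1)) = \<psi> (N (-1), N (-2))"
  by (rule grover_transmit; auto simp: insert_commute)+

lemma grover_inward_arc:
  "grover \<psi> (N (int k + 2), N (int k + 1)) = \<psi> (N (int k + 1), N (int k))"
  "grover \<psi> (N (- int k - 3), N (- int k - 2)) = \<psi> (N (- int k - 2), N (- int k - 1))"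
  "grover \<psi> (N (-2), N (-1)) = \<psi> (N (-1), Zp)"
  by (rule grover_transmit; auto simp: insert_commute)+

lemma sum_1_to_4: "(\<Sum>j=1..4. f j) = f 1 + f 2 + f 3 + f (4::nat)"
  by (simp add: numeral_eq_Suc add.assoc)

definition cycle_asym :: "(vert \<times> vert \<Rightarrow> complex) \<Rightarrow> nat \<Rightarrow> complex" where
  "cycle_asym \<psi> j = \<psi> (cyc ! (j - 1)) - \<psi> (cycbar ! (j - 1))"

definition cycle_sym :: "(vert \<times> vert \<Rightarrow> complex) \<Rightarrow> nat \<Rightarrow> complex" where
  "cycle_sym \<psi> j = \<psi> (cyc ! (j - 1)) + \<psi> (cycbar ! (j - 1))"

lemma cycle_asym_simps:
  "cycle_asym \<psi> 1 = \<psi> (Zp, Uv) - \<psi> (Zp, Dv)" "cycle_asym \<psi> 2 = \<psi> (Uv, N 0) - \<psi> (Dv, N 0)"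
  "cycle_asym \<psi> 3 = \<psi> (N 0, Dv) - \<psi> (N 0, Uv)" "cycle_asym \<psi> 4 = \<psi> (Dv, Zp) - \<psi> (Uv, Zp)"
  by (simp_all add: cycle_asym_def cyc_def cycbar_def)

lemma cycle_sym_simps:
  "cycle_sym \<psi> 1 = \<psi> (Zp, Uv) + \<psi> (Zp, Dv)" "cycle_sym \<psi> 2 = \<psi> (Uv, N 0) + \<psi> (Dv, N 0)"
  "cycle_sym \<psi> 3 = \<psi> (N 0, Dv) + \<psi> (N 0, Uv)" "cycle_sym \<psi> 4 = \<psi> (Dv, Zp) + \<psi> (Uv, Zp)"
  by (simp_all add: cycle_sym_def cyc_def cycbar_def)

text \<open>On the antisymmetric part the hub coins act as pure reflections, so \<open>U\<close> shifts it around
  the cycle.\<close>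
lemma cycle_asym_grover:
  "cycle_asym (grover \<psi>) 1 = cycle_asym \<psi> 2"
  "cycle_asym (grover \<psi>) 2 = cycle_asym \<psi> 3"
  "cycle_asym (grover \<psi>) 3 = cycle_asym \<psi> 4"
  "cycle_asym (grover \<psi>) 4 = cycle_asym \<psi> 1"
  unfolding cycle_asym_simps by (simp_all add: grover_along_cycle grover_into_hub)

lemma cycle_sym_grover:
  "cycle_sym (grover \<psi>) 1 = cycle_sym \<psi> 2"
  "cycle_sym (grover \<psi>) 2 = cycle_sym \<psi> 3 / 3 + 4/3 * \<psi> (N 0, N 1)"
  "cycle_sym (grover \<psi>) 3 = cycle_sym \<psi> 4"
  "cycle_sym (grover \<psi>) 4 = cycle_sym \<psi> 1 / 3 + 4/3 * \<psi> (Zp, N (-1))"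
  unfolding cycle_sym_simps
  by (simp_all add: grover_along_cycle grover_into_hub out_sum_hubs field_simps)

definition cycle_energy :: "(vert \<times> vert \<Rightarrow> complex) \<Rightarrow> real" where
  "cycle_energy \<psi> = (\<Sum>j=1..4. (cmod (cycle_asym \<psi> j))\<^sup>2)"

lemma cycle_energy_grover: "cycle_energy (grover \<psi>) = cycle_energy \<psi>"
  unfolding cycle_energy_def sum_1_to_4 cycle_asym_grover by simp

lemma cycle_energy_eq_0_iff: "cycle_energy \<psi> = 0 \<longleftrightarrow> (\<forall>j\<in>{1..4}. cycle_asym \<psi> j = 0)"
  by (simp add: cycle_energy_def sum_nonneg_eq_0_iff)

lemma exp_quarter_turn: "exp (2 * pi * \<i> * of_nat m * of_nat j / of_nat 4) = \<i> ^ (m * j)"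
proof -
  have "2 * pi * \<i> * of_nat m * of_nat j / of_nat 4 = of_nat (m * j) * (\<i> * of_real (pi / 2))"
    by (simp add: field_simps)
  then show ?thesis by (simp only: exp_of_nat_mult cis_conv_exp[symmetric] cis_pi_half)
qed

lemma length_cycles: "length cyc = 4" "length cycbar = 4"
  by (simp_all add: cyc_def cycbar_def)

lemma gvec_eq:
  "gvec m e = (\<Sum>j=1..4. \<i> ^ (m * j) *
     ((if cyc ! (j - 1) = e then 1 else 0) - (if cycbar ! (j - 1) = e then 1 else 0)))"
  unfolding gvec_def wvec_def length_cycles exp_quarter_turn sum_subtractf[symmetric]
  by (rule sum.cong) (simp_all add: right_diff_distrib)

lemma cycle_arcs: "finite (set cyc \<union> set cycbar)" "set cyc \<union> set cycbar \<subseteq> arcs"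
  by (auto simp: cyc_def cycbar_def arc_iff_nbrs)

lemma nth_cycle_arcs:
  assumes "j \<in> {1..4}"
  shows "cyc ! (j - 1) \<in> set cyc \<union> set cycbar" "cycbar ! (j - 1) \<in> set cyc \<union> set cycbar"
  using assms by (auto simp: length_cycles)

lemma gvec_support: "e \<notin> set cyc \<union> set cycbar \<Longrightarrow> gvec m e = 0"
  unfolding gvec_eq by (rule sum.neutral) (use nth_cycle_arcs in fastforce)

lemma l2inner_finite_support:
  assumes "finite S" "S \<subseteq> arcs" "\<And>e. e \<notin> S \<Longrightarrow> \<phi> e = 0"
  shows "l2inner \<phi> \<psi> = (\<Sum>e\<in>S. cnj (\<phi> e) * \<psi> e)"
proof -
  have "l2inner \<phi> \<psi> = infsum (\<lambda>e. cnj (\<phi> e) * \<psi> e) S"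
    unfolding l2inner_def by (rule infsum_cong_neutral) (use assms in auto)
  then show ?thesis using assms(1) by simp
qed

lemma sum_delta_diff:
  fixes f :: "'a \<Rightarrow> 'b::comm_ring_1"
  assumes "finite S" "a \<in> S" "b \<in> S"
  shows "(\<Sum>e\<in>S. ((if a = e then 1 else 0) - (if b = e then 1 else 0)) * f e) = f a - f b"
  using assms
  by (simp add: left_diff_distrib sum_subtractf if_distrib[of "\<lambda>x. x * _"] sum.delta cong: if_cong)

lemma l2inner_gvec: "l2inner (gvec m) \<psi> = (\<Sum>j=1..4. cnj (\<i> ^ (m * j)) * cycle_asym \<psi> j)"
proof -
  let ?S = "set cyc \<union> set cycbar"
  let ?\<delta> = "\<lambda>a e. if a = e then 1 else 0 :: complex"
  have "l2inner (gvec m) \<psi> = (\<Sum>e\<in>?S. cnj (gvec m e) * \<psi> e)"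
    by (rule l2inner_finite_support[OF cycle_arcs gvec_support])
  also have "\<dots> = (\<Sum>j=1..4. cnj (\<i> ^ (m * j)) *
                    (\<Sum>e\<in>?S. (?\<delta> (cyc ! (j - 1)) e - ?\<delta> (cycbar ! (j - 1)) e) * \<psi> e))"
    unfolding gvec_eq
    by (simp add: sum_distrib_left sum_distrib_right mult.assoc sum.swap[of _ ?S] if_distrib[of cnj] cong: if_cong)
  also have "\<dots> = (\<Sum>j=1..4. cnj (\<i> ^ (m * j)) * cycle_asym \<psi> j)"
  proof (intro sum.cong refl arg_cong[where f = "(*) _"])
    fix j :: nat assume "j \<in> {1..4}"
    then show "(\<Sum>e\<in>?S. (?\<delta> (cyc ! (j - 1)) e - ?\<delta> (cycbar ! (j - 1)) e) * \<psi> e) = cycle_asym \<psi> j"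
      unfolding cycle_asym_def by (intro sum_delta_diff cycle_arcs(1) nth_cycle_arcs)
  qed
  finally show ?thesis .
qed

lemma dft4_inversion:
  fixes a :: "nat \<Rightarrow> complex"
  assumes "k \<in> {1..4}"
  shows "4 * a k = (\<Sum>m=1..4. \<i> ^ (m * k) * (\<Sum>j=1..4. cnj (\<i> ^ (m * j)) * a j))"
proof -
  from assms consider "k = 1" | "k = 2" | "k = 3" | "k = 4" by fastforce
  then show ?thesis by cases (simp_all add: sum_1_to_4 eval_nat_numeral algebra_simps)
qed

lemma gvec_in_Gamma:
  assumes "m \<in> {1..4}"
  shows "gvec m \<in> Gamma"
proof -
  have "gvec m = (\<lambda>e. \<Sum>k=1..4. (\<lambda>k. if k = m then 1 else 0) k * gvec k e)"
    using assms by (simp add: if_distrib[of "\<lambda>x. x * _"] sum.delta cong: if_cong)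
  then show ?thesis unfolding Gamma_def by (intro CollectI exI conjI TrueI)
qed

lemma l2inner_Gamma:
  assumes "\<phi> \<in> Gamma"
  obtains a where "l2inner \<phi> \<psi> = (\<Sum>m=1..4. cnj (a m) * l2inner (gvec m) \<psi>)"
proof -
  let ?S = "set cyc \<union> set cycbar"
  from assms obtain a where \<phi>: "\<phi> = (\<lambda>e. \<Sum>m=1..4. a m * gvec m e)"
    unfolding Gamma_def by blast
  have "l2inner \<phi> \<psi> = (\<Sum>e\<in>?S. cnj (\<phi> e) * \<psi> e)"
    by (rule l2inner_finite_support[OF cycle_arcs]) (simp add: \<phi> gvec_support)
  also have "\<dots> = (\<Sum>m=1..4. cnj (a m) * (\<Sum>e\<in>?S. cnj (gvec m e) * \<psi> e))"
    unfolding \<phi> by (simp add: sum_distrib_left sum_distrib_right mult.assoc sum.swap[of _ ?S])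
  also have "\<dots> = (\<Sum>m=1..4. cnj (a m) * l2inner (gvec m) \<psi>)"
    by (intro sum.cong refl arg_cong[where f = "(*) _"]
        l2inner_finite_support[OF cycle_arcs gvec_support, symmetric])
  finally show ?thesis by (rule that)
qed

lemma perp_Gamma_iff:
  assumes "\<psi> \<in> l2"
  shows "\<psi> \<in> perp Gamma \<longleftrightarrow> cycle_energy \<psi> = 0"
proof -
  have "\<psi> \<in> perp Gamma \<longleftrightarrow> (\<forall>m\<in>{1..4}. l2inner (gvec m) \<psi> = 0)"
  proof
    show "\<psi> \<in> perp Gamma \<Longrightarrow> \<forall>m\<in>{1..4}. l2inner (gvec m) \<psi> = 0"
      using gvec_in_Gamma by (auto simp: perp_def)
    assume orth: "\<forall>m\<in>{1..4}. l2inner (gvec m) \<psi> = 0"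
    show "\<psi> \<in> perp Gamma" unfolding perp_def
    proof (intro CollectI conjI assms ballI)
      fix \<phi> assume "\<phi> \<in> Gamma"
      then obtain a where "l2inner \<phi> \<psi> = (\<Sum>m=1..4. cnj (a m) * l2inner (gvec m) \<psi>)"
        by (rule l2inner_Gamma)
      with orth show "l2inner \<phi> \<psi> = 0" by simp
    qed
  qed
  also have "\<dots> \<longleftrightarrow> (\<forall>j\<in>{1..4}. cycle_asym \<psi> j = 0)"
  proof
    assume orth: "\<forall>m\<in>{1..4}. l2inner (gvec m) \<psi> = 0"
    show "\<forall>j\<in>{1..4}. cycle_asym \<psi> j = 0"
    proof
      fix j :: nat assume j: "j \<in> {1..4}"
      have "4 * cycle_asym \<psi> j = (\<Sum>m=1..4. \<i> ^ (m * j) * l2inner (gvec m) \<psi>)"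
        unfolding l2inner_gvec by (rule dft4_inversion[OF j])
      also have "\<dots> = 0" using orth by simp
      finally show "cycle_asym \<psi> j = 0" by simp
    qed
  qed (simp add: l2inner_gvec)
  also have "\<dots> \<longleftrightarrow> cycle_energy \<psi> = 0"
    by (rule cycle_energy_eq_0_iff[symmetric])
  finally show ?thesis .
qed

lemma contraction_bound:
  fixes a e :: "nat \<Rightarrow> real"
  assumes c: "0 \<le> c" "c < 1" and "0 < k" "0 \<le> \<delta>"
    and step: "\<And>t. a (t + k) \<le> c * a t + e t" and e: "\<And>t. T \<le> t \<Longrightarrow> e t \<le> \<delta>"
    and M: "\<And>t. T \<le> t \<Longrightarrow> t < T + k \<Longrightarrow> a t \<le> M"
  shows "T \<le> t \<Longrightarrow> a t \<le> M * c ^ ((t - T) div k) + \<delta> / (1 - c)"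
proof (induction t rule: less_induct)
  case (less t)
  show ?case
  proof (cases "t < T + k")
    case True
    then have "(t - T) div k = 0" using less.prems by simp
    moreover have "0 \<le> \<delta> / (1 - c)" using \<open>0 \<le> \<delta>\<close> c by simp
    ultimately show ?thesis using M[OF less.prems True] by simp
  next
    case False
    define s where "s = t - k"
    have s: "t = s + k" "T \<le> s" "s < t" using False \<open>0 < k\<close> by (auto simp: s_def)
    have "t - T = (s - T) + k" using s by simp
    then have q: "(t - T) div k = Suc ((s - T) div k)" using \<open>0 < k\<close> by simp
    have "a t \<le> c * a s + e s" using step[of s] s(1) by simp
    also have "\<dots> \<le> c * (M * c ^ ((s - T) div k) + \<delta> / (1 - c)) + \<delta>"
      using less.IH[OF s(3) s(2)] e[OF s(2)] c by (intro add_mono mult_left_mono) auto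
    also have "\<dots> = M * c ^ ((t - T) div k) + \<delta> / (1 - c)"
      using c unfolding q by (simp add: field_simps)
    finally show ?thesis .
  qed
qed

lemma contraction_tendsto_zero:
  fixes a e :: "nat \<Rightarrow> real"
  assumes c: "0 \<le> c" "c < 1" and "0 < k" and nonneg: "\<And>t. 0 \<le> a t"
    and step: "\<And>t. a (t + k) \<le> c * a t + e t" and e: "e \<longlonglongrightarrow> 0"
  shows "a \<longlonglongrightarrow> 0"
proof (rule LIMSEQ_I)
  fix \<epsilon> :: real assume "0 < \<epsilon>"
  define \<delta> where "\<delta> = \<epsilon> * (1 - c) / 2"
  have \<delta>: "0 < \<delta>" "\<delta> \<le> \<epsilon> / 2" "\<delta> / (1 - c) = \<epsilon> / 2"
    using \<open>0 < \<epsilon>\<close> c by (auto simp: \<delta>_def field_simps)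
  obtain T where T0: "\<And>t. T \<le> t \<Longrightarrow> norm (e t - 0) < \<delta>"
    using LIMSEQ_D[OF e \<open>0 < \<delta>\<close>] by blast
  have T: "e t \<le> \<delta>" if "T \<le> t" for t
    using T0[OF that] by (simp add: abs_less_iff)
  define M where "M = Max (a ` {T..<T + k})"
  have M: "a t \<le> M" if "T \<le> t" "t < T + k" for t
    unfolding M_def using that by (intro Max_ge) auto
  have "0 \<le> M" using M[of T] nonneg[of T] \<open>0 < k\<close> by simp
  note bound = contraction_bound[where a = a and e = e and T = T and M = M,
      OF c \<open>0 < k\<close> less_imp_le[OF \<delta>(1)] step T M]
  obtain K where K: "c ^ K < \<delta> / (M + 1)"
    using real_arch_pow_inv[of "\<delta> / (M + 1)" c] \<delta> \<open>0 \<le> M\<close> c by auto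
  show "\<exists>n0. \<forall>n\<ge>n0. norm (a n - 0) < \<epsilon>"
  proof (intro exI allI impI)
    fix n assume n: "T + k * K \<le> n"
    then have "(k * K) div k \<le> (n - T) div k" by (intro div_le_mono) simp
    then have "K \<le> (n - T) div k" using \<open>0 < k\<close> by simp
    then have "c ^ ((n - T) div k) \<le> c ^ K"
      using c by (intro power_decreasing) auto
    then have "M * c ^ ((n - T) div k) \<le> (M + 1) * c ^ K"
      using \<open>0 \<le> M\<close> c by (intro mult_mono) auto
    also have "\<dots> < \<delta>" using K \<open>0 \<le> M\<close> by (simp add: field_simps)
    finally have "a n < \<epsilon>" using bound[of n] n \<delta> by linarith
    then show "norm (a n - 0) < \<epsilon>" using nonneg[of n] by simp
  qed
qed

lemma damped_recurrence_tendsto_zero: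
  fixes x f :: "nat \<Rightarrow> 'a::real_normed_vector"
  assumes "0 \<le> c" "c < 1" "0 < k" and step: "\<And>t. x (t + k) = c *\<^sub>R x t + f t" and "f \<longlonglongrightarrow> 0"
  shows "x \<longlonglongrightarrow> 0"
proof -
  have "(\<lambda>t. norm (x t)) \<longlonglongrightarrow> 0"
  proof (rule contraction_tendsto_zero[OF assms(1-3)])
    show "norm (x (t + k)) \<le> c * norm (x t) + norm (f t)" for t
      unfolding step using norm_triangle_ineq[of "c *\<^sub>R x t" "f t"] assms(1) by simp
    show "(\<lambda>t. norm (f t)) \<longlonglongrightarrow> 0" using assms(5) by (simp add: tendsto_norm_zero_iff)
  qed simp
  then show ?thesis by (simp only: tendsto_norm_zero_iff)
qed

lemma l2_tendsto_zero:
  assumes "\<psi> \<in> l2" and "inj h" and "range h \<subseteq> arcs"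
  shows "(\<lambda>k. \<psi> (h k)) \<longlonglongrightarrow> 0"
proof -
  have "(\<lambda>e. (cmod (\<psi> e))\<^sup>2) summable_on range h"
    using assms(1,3) by (auto simp: l2_def intro: summable_on_subset_banach)
  then have "((\<lambda>e. (cmod (\<psi> e))\<^sup>2) \<circ> h) summable_on UNIV"
    using summable_on_reindex[OF assms(2)] by blast
  then have "summable (\<lambda>k. (cmod (\<psi> (h k)))\<^sup>2)"
    by (subst summable_on_UNIV_nonneg_real_iff[symmetric]) (auto simp: o_def)
  then have "(\<lambda>k. (cmod (\<psi> (h k)))\<^sup>2) \<longlonglongrightarrow> 0" by (rule summable_LIMSEQ_zero)
  then have "(\<lambda>k. sqrt ((cmod (\<psi> (h k)))\<^sup>2)) \<longlonglongrightarrow> sqrt 0" by (rule tendsto_real_sqrt)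
  then have "(\<lambda>k. norm (\<psi> (h k))) \<longlonglongrightarrow> 0" by simp
  then show ?thesis by (simp only: tendsto_norm_zero_iff)
qed

lemma cycle_energy_walk: "cycle_energy ((grover ^^ t) \<psi>) = cycle_energy \<psi>"
  by (induction t) (simp_all add: cycle_energy_grover)

lemma norm_diff_sq_le: "(norm (a - b))\<^sup>2 \<le> 2 * (norm a)\<^sup>2 + 2 * (norm (b :: 'a::real_normed_vector))\<^sup>2"
proof -
  have "(norm (a - b))\<^sup>2 \<le> (norm a + norm b)\<^sup>2"
    by (intro power_mono norm_triangle_ineq4) simp
  also have "\<dots> \<le> 2 * (norm a)\<^sup>2 + 2 * (norm b)\<^sup>2"
    using sum_squares_ge_zero[of "norm a - norm b" 0] by (simp add: power2_eq_square algebra_simps)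
  finally show ?thesis .
qed

lemma cycle_energy_le_probX: "cycle_energy \<psi> \<le> 2 * probX \<psi> 0"
proof -
  have "probX \<psi> 0 = (cmod (\<psi> (N 0, Uv)))\<^sup>2 + (cmod (\<psi> (N 0, Dv)))\<^sup>2 + (cmod (\<psi> (N 0, N 1)))\<^sup>2
      + (cmod (\<psi> (Uv, N 0)))\<^sup>2 + (cmod (\<psi> (Uv, Zp)))\<^sup>2
      + (cmod (\<psi> (Zp, Uv)))\<^sup>2 + (cmod (\<psi> (Zp, Dv)))\<^sup>2 + (cmod (\<psi> (Zp, N (-1))))\<^sup>2
      + (cmod (\<psi> (Dv, Zp)))\<^sup>2 + (cmod (\<psi> (Dv, N 0)))\<^sup>2"
    by (simp add: probX_def Vset_def mu_eq add.assoc)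
  then show ?thesis
    unfolding cycle_energy_def sum_1_to_4 cycle_asym_simps
    using norm_diff_sq_le[of "\<psi> (Zp, Uv)" "\<psi> (Zp, Dv)"] norm_diff_sq_le[of "\<psi> (Uv, N 0)" "\<psi> (Dv, N 0)"]
      norm_diff_sq_le[of "\<psi> (N 0, Dv)" "\<psi> (N 0, Uv)"] norm_diff_sq_le[of "\<psi> (Dv, Zp)" "\<psi> (Uv, Zp)"]
      zero_le_power2[of "cmod (\<psi> (N 0, N 1))"] zero_le_power2[of "cmod (\<psi> (Zp, N (-1)))"]
    by linarith
qed

lemma walk_outward_arc:
  "n \<ge> 0 \<Longrightarrow> (grover ^^ t) \<psi> (N n, N (n + 1)) = \<psi> (N (n + int t), N (n + int t + 1))"
  "n \<le> -1 \<Longrightarrow> (grover ^^ t) \<psi> (N n, N (n - 1)) = \<psi> (N (n - int t), N (n - int t - 1))"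
proof (induction t arbitrary: n)
  case (Suc t)
  { case 1
    then show ?case
      using grover_outward_arc(1)[OF 1, of "(grover ^^ t) \<psi>"] Suc.IH(1)[of "n + 1"]
      by (simp add: ac_simps) }
  { case 2
    then show ?case
      using grover_outward_arc(2)[OF 2, of "(grover ^^ t) \<psi>"] Suc.IH(2)[of "n - 1"]
      by (simp add: algebra_simps) }
qed simp_all

lemma walk_inward_arc:
  "(grover ^^ (t + k)) \<psi> (N (int k + 1), N (int k)) = (grover ^^ t) \<psi> (N 1, N 0)"
  "(grover ^^ (t + k)) \<psi> (N (- int k - 2), N (- int k - 1)) = (grover ^^ t) \<psi> (N (-2), N (-1))"
proof (induction k)
  case (Suc k)
  have "(grover ^^ Suc (t + k)) \<psi> (N (int k + 2), N (int k + 1)) = (grover ^^ t) \<psi> (N 1, N 0)"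
    using Suc.IH(1) by (simp add: grover_inward_arc(1))
  then show "(grover ^^ (t + Suc k)) \<psi> (N (int (Suc k) + 1), N (int (Suc k))) =
      (grover ^^ t) \<psi> (N 1, N 0)"
    by (simp add: ac_simps)
  have "(grover ^^ Suc (t + k)) \<psi> (N (- int k - 3), N (- int k - 2)) =
      (grover ^^ t) \<psi> (N (-2), N (-1))"
    using Suc.IH(2) by (simp add: grover_inward_arc(2))
  then show "(grover ^^ (t + Suc k)) \<psi> (N (- int (Suc k) - 2), N (- int (Suc k) - 1)) =
      (grover ^^ t) \<psi> (N (-2), N (-1))"
    by (simp add: algebra_simps)
qed simp_all

lemma walk_outward_arc_tendsto_zero:
  assumes "\<psi> \<in> l2"
  shows "n \<ge> 0 \<Longrightarrow> (\<lambda>t. (grover ^^ t) \<psi> (N n, N (n + 1))) \<longlonglongrightarrow> 0"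
    and "n \<le> -1 \<Longrightarrow> (\<lambda>t. (grover ^^ t) \<psi> (N n, N (n - 1))) \<longlonglongrightarrow> 0"
proof -
  show "(\<lambda>t. (grover ^^ t) \<psi> (N n, N (n + 1))) \<longlonglongrightarrow> 0" if "n \<ge> 0"
  proof -
    have "inj (\<lambda>t::nat. (N (n + int t), N (n + int t + 1)))" by (auto simp: inj_def)
    moreover have "range (\<lambda>t::nat. (N (n + int t), N (n + int t + 1))) \<subseteq> arcs"
      using that by (auto simp: arc_iff_nbrs)
    ultimately show ?thesis
      using l2_tendsto_zero[OF assms] walk_outward_arc(1)[OF that] by simp
  qed
  show "(\<lambda>t. (grover ^^ t) \<psi> (N n, N (n - 1))) \<longlonglongrightarrow> 0" if "n \<le> -1"
  proof -
    have "inj (\<lambda>t::nat. (N (n - int t), N (n - int t - 1)))" by (auto simp: inj_def)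
    moreover have "range (\<lambda>t::nat. (N (n - int t), N (n - int t - 1))) \<subseteq> arcs"
      using that by (auto simp: arc_iff_nbrs)
    ultimately show ?thesis
      using l2_tendsto_zero[OF assms] walk_outward_arc(2)[OF that] by simp
  qed
qed

lemma walk_arcs_from_hubs_tendsto_zero:
  assumes "\<psi> \<in> l2"
  shows "(\<lambda>t. (grover ^^ t) \<psi> (N 0, N 1)) \<longlonglongrightarrow> 0" "(\<lambda>t. (grover ^^ t) \<psi> (Zp, N (-1))) \<longlonglongrightarrow> 0"
proof -
  show "(\<lambda>t. (grover ^^ t) \<psi> (N 0, N 1)) \<longlonglongrightarrow> 0"
    using walk_outward_arc_tendsto_zero(1)[OF assms, of 0] by simp
  have "(\<lambda>t. (grover ^^ Suc t) \<psi> (Zp, N (-1))) \<longlonglongrightarrow> 0"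
    using walk_outward_arc_tendsto_zero(2)[OF assms, of "-1"] by (simp add: grover_outward_arc(3))
  then show "(\<lambda>t. (grover ^^ t) \<psi> (Zp, N (-1))) \<longlonglongrightarrow> 0" by (rule LIMSEQ_imp_Suc)
qed

lemma cycle_sym_walk_4:
  "cycle_sym ((grover ^^ (t + 4)) \<psi>) 1 = (1/9) *\<^sub>R cycle_sym ((grover ^^ t) \<psi>) 1
     + (4/9 * (grover ^^ t) \<psi> (Zp, N (-1)) + 4/3 * (grover ^^ (t + 2)) \<psi> (N 0, N 1))"
  "cycle_sym ((grover ^^ (t + 4)) \<psi>) 3 = (1/9) *\<^sub>R cycle_sym ((grover ^^ t) \<psi>) 3
     + (4/9 * (grover ^^ t) \<psi> (N 0, N 1) + 4/3 * (grover ^^ (t + 2)) \<psi> (Zp, N (-1)))"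
proof -
  have steps: "t + 4 = Suc (Suc (Suc (Suc t)))" "t + 2 = Suc (Suc t)" by simp_all
  show "cycle_sym ((grover ^^ (t + 4)) \<psi>) 1 = (1/9) *\<^sub>R cycle_sym ((grover ^^ t) \<psi>) 1
     + (4/9 * (grover ^^ t) \<psi> (Zp, N (-1)) + 4/3 * (grover ^^ (t + 2)) \<psi> (N 0, N 1))"
    "cycle_sym ((grover ^^ (t + 4)) \<psi>) 3 = (1/9) *\<^sub>R cycle_sym ((grover ^^ t) \<psi>) 3
     + (4/9 * (grover ^^ t) \<psi> (N 0, N 1) + 4/3 * (grover ^^ (t + 2)) \<psi> (Zp, N (-1)))"
    unfolding steps funpow.simps comp_apply cycle_sym_grover
    by (simp_all add: scaleR_conv_of_real field_simps)
qed

lemma cycle_sym_tendsto_zero: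
  assumes "\<psi> \<in> l2" and "j \<in> {1..4}"
  shows "(\<lambda>t. cycle_sym ((grover ^^ t) \<psi>) j) \<longlonglongrightarrow> 0"
proof -
  note hubs = walk_arcs_from_hubs_tendsto_zero[OF assms(1)]
  have forcing: "(\<lambda>t. 4/9 * (grover ^^ t) \<psi> a + 4/3 * (grover ^^ (t + 2)) \<psi> b) \<longlonglongrightarrow> 0"
    if "(\<lambda>t. (grover ^^ t) \<psi> a) \<longlonglongrightarrow> 0" "(\<lambda>t. (grover ^^ t) \<psi> b) \<longlonglongrightarrow> 0" for a b
    using that(1) LIMSEQ_ignore_initial_segment[OF that(2), of 2]
    by (intro tendsto_add_zero tendsto_mult_right_zero)
  have odd: "(\<lambda>t. cycle_sym ((grover ^^ t) \<psi>) 1) \<longlonglongrightarrow> 0" "(\<lambda>t. cycle_sym ((grover ^^ t) \<psi>) 3) \<longlonglongrightarrow> 0"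
    by (rule damped_recurrence_tendsto_zero[where c = "1/9" and k = 4, OF _ _ _ cycle_sym_walk_4(1) forcing]
        damped_recurrence_tendsto_zero[where c = "1/9" and k = 4, OF _ _ _ cycle_sym_walk_4(2) forcing];
        use hubs in simp)+
  have even: "(\<lambda>t. cycle_sym ((grover ^^ t) \<psi>) 2) \<longlonglongrightarrow> 0" "(\<lambda>t. cycle_sym ((grover ^^ t) \<psi>) 4) \<longlonglongrightarrow> 0"
    using LIMSEQ_Suc[OF odd(1)] LIMSEQ_Suc[OF odd(2)]
    by (simp_all only: funpow.simps comp_apply cycle_sym_grover)
  from assms(2) consider "j = 1" | "j = 2" | "j = 3" | "j = 4" by fastforce
  then show ?thesis using odd even by cases simp_all
qed

lemma cycle_nth_eq:
  "\<psi> (cyc ! (j - 1)) = (cycle_sym \<psi> j + cycle_asym \<psi> j) / 2"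
  "\<psi> (cycbar ! (j - 1)) = (cycle_sym \<psi> j - cycle_asym \<psi> j) / 2"
  by (simp_all add: cycle_sym_def cycle_asym_def field_simps)

lemma walk_cycle_tendsto_zero:
  assumes "\<psi> \<in> l2" and "cycle_energy \<psi> = 0" and "e \<in> set cyc \<union> set cycbar"
  shows "(\<lambda>t. (grover ^^ t) \<psi> e) \<longlonglongrightarrow> 0"
proof -
  obtain j where j: "j \<in> {1..4}" and e: "e = cyc ! (j - 1) \<or> e = cycbar ! (j - 1)"
  proof -
    from assms(3) obtain i where "i < 4" "e = cyc ! i \<or> e = cycbar ! i"
      unfolding Un_iff in_set_conv_nth length_cycles by blast
    then show ?thesis by (intro that[of "i + 1"]) auto
  qed
  have asym: "cycle_asym ((grover ^^ t) \<psi>) j = 0" for t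
    using cycle_energy_walk[of t \<psi>] assms(2) j by (simp add: cycle_energy_eq_0_iff)
  have half: "(grover ^^ t) \<psi> e = cycle_sym ((grover ^^ t) \<psi>) j / 2" for t
    using e cycle_nth_eq[of "(grover ^^ t) \<psi>" j]
    by (elim disjE; simp only: asym add_0_right diff_zero)
  show ?thesis
    unfolding half by (rule tendsto_divide_zero[OF cycle_sym_tendsto_zero[OF assms(1) j]])
qed

lemma walk_arcs_into_hubs_tendsto_zero:
  assumes "\<psi> \<in> l2" and "cycle_energy \<psi> = 0"
  shows "(\<lambda>t. (grover ^^ t) \<psi> (N 1, N 0)) \<longlonglongrightarrow> 0" "(\<lambda>t. (grover ^^ t) \<psi> (N (-1), Zp)) \<longlonglongrightarrow> 0"
proof -
  note cycle = walk_cycle_tendsto_zero[OF assms]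
  note out = walk_arcs_from_hubs_tendsto_zero[OF assms(1)]
  have "(\<lambda>t. (grover ^^ Suc t) \<psi> (N 1, N 0)) \<longlonglongrightarrow> 0"
    using cycle[of "(N 0, Uv)"] cycle[of "(N 0, Dv)"] out(1)
    by (simp add: grover_into_hub out_sum_hubs cyc_def cycbar_def
        tendsto_add_zero tendsto_diff[where a = 0 and b = 0, simplified] tendsto_mult_right_zero)
  then show "(\<lambda>t. (grover ^^ t) \<psi> (N 1, N 0)) \<longlonglongrightarrow> 0" by (rule LIMSEQ_imp_Suc)
  have "(\<lambda>t. (grover ^^ Suc t) \<psi> (N (-1), Zp)) \<longlonglongrightarrow> 0"
    using cycle[of "(Zp, Uv)"] cycle[of "(Zp, Dv)"] out(2)
    by (simp add: grover_into_hub out_sum_hubs cyc_def cycbar_def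
        tendsto_add_zero tendsto_diff[where a = 0 and b = 0, simplified] tendsto_mult_right_zero)
  then show "(\<lambda>t. (grover ^^ t) \<psi> (N (-1), Zp)) \<longlonglongrightarrow> 0" by (rule LIMSEQ_imp_Suc)
qed

lemma arc_cases:
  assumes "(v, w) \<in> arcs"
  obtains (cycle) "(v, w) \<in> set cyc \<union> set cycbar"
  | (right_outward) n where "n \<ge> 0" "v = N n" "w = N (n + 1)"
  | (left_outward) n where "n \<le> -1" "v = N n" "w = N (n - 1)"
  | (hub_outward) "v = Zp" "w = N (-1)"
  | (right_inward) n where "n \<ge> 0" "v = N (n + 1)" "w = N n"
  | (left_inward) n where "n \<le> -1" "v = N (n - 1)" "w = N n"
  | (hub_inward) "v = N (-1)" "w = Zp"
proof (cases v)
  case (N n)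
  consider "n = 0" | "n = -1" | "n \<ge> 1" | "n \<le> -2" by linarith
  then show ?thesis
  proof cases
    case 1
    then show ?thesis using assms N cycle right_outward[of 0] by (auto simp: arc_iff_nbrs cyc_def cycbar_def)
  next
    case 2
    then show ?thesis using assms N hub_inward left_outward[of "-1"] by (auto simp: arc_iff_nbrs)
  next
    case 3
    then show ?thesis using assms N right_outward[of n] right_inward[of "n - 1"]
      by (auto simp: arc_iff_nbrs)
  next
    case 4
    then show ?thesis using assms N left_outward[of n] left_inward[of "n + 1"]
      by (auto simp: arc_iff_nbrs)
  qed
qed (use assms cycle hub_outward in \<open>auto simp: arc_iff_nbrs cyc_def cycbar_def\<close>)

lemma walk_tendsto_zero:
  assumes "\<psi> \<in> l2" and "cycle_energy \<psi> = 0" and "(v, w) \<in> arcs"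
  shows "(\<lambda>t. (grover ^^ t) \<psi> (v, w)) \<longlonglongrightarrow> 0"
  using assms(3)
proof (cases rule: arc_cases)
  case cycle
  then show ?thesis by (rule walk_cycle_tendsto_zero[OF assms(1,2)])
next
  case (right_outward n)
  then show ?thesis using walk_outward_arc_tendsto_zero(1)[OF assms(1)] by simp
next
  case (left_outward n)
  then show ?thesis using walk_outward_arc_tendsto_zero(2)[OF assms(1)] by simp
next
  case hub_outward
  then show ?thesis using walk_arcs_from_hubs_tendsto_zero(2)[OF assms(1)] by simp
next
  case (right_inward n)
  then have "(\<lambda>t. (grover ^^ (t + nat n)) \<psi> (v, w)) \<longlonglongrightarrow> 0"
    using walk_inward_arc(1)[of _ "nat n" \<psi>] walk_arcs_into_hubs_tendsto_zero(1)[OF assms(1,2)]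
    by simp
  then show ?thesis by (rule LIMSEQ_offset)
next
  case (left_inward n)
  have "(\<lambda>t. (grover ^^ Suc t) \<psi> (N (-2), N (-1))) \<longlonglongrightarrow> 0"
    using walk_arcs_into_hubs_tendsto_zero(2)[OF assms(1,2)] by (simp add: grover_inward_arc(3))
  then have "(\<lambda>t. (grover ^^ t) \<psi> (N (-2), N (-1))) \<longlonglongrightarrow> 0" by (rule LIMSEQ_imp_Suc)
  then have "(\<lambda>t. (grover ^^ (t + nat (- n - 1))) \<psi> (v, w)) \<longlonglongrightarrow> 0"
    using left_inward walk_inward_arc(2)[of _ "nat (- n - 1)" \<psi>] by simp
  then show ?thesis by (rule LIMSEQ_offset)
next
  case hub_inward
  then show ?thesis using walk_arcs_into_hubs_tendsto_zero(2)[OF assms(1,2)] by simp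
qed

lemma probX_tendsto_zero:
  assumes "\<psi> \<in> l2" and "cycle_energy \<psi> = 0"
  shows "(\<lambda>t. probX ((grover ^^ t) \<psi>) j) \<longlonglongrightarrow> 0"
  unfolding probX_def mu_eq
proof (intro tendsto_null_sum)
  fix v w assume "w \<in> nbrs v"
  then have "(\<lambda>t. norm ((grover ^^ t) \<psi> (v, w))) \<longlonglongrightarrow> 0"
    using walk_tendsto_zero[OF assms] by (simp add: arc_iff_nbrs tendsto_norm_zero_iff)
  then show "(\<lambda>t. (cmod ((grover ^^ t) \<psi> (v, w)))\<^sup>2) \<longlonglongrightarrow> 0"
    using tendsto_power[of _ 0 _ 2] by fastforce
qed

theorem theorem1p2:
  fixes \<Psi>0 :: "vert \<times> vert \<Rightarrow> complex"
  assumes "\<Psi>0 \<in> l2" and "l2norm \<Psi>0 = 1"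
  shows "(\<exists>j::int. limsup (\<lambda>t. ereal (probX ((grover ^^ t) \<Psi>0) j)) > 0)
           \<longleftrightarrow> \<Psi>0 \<notin> perp Gamma"
proof (cases "cycle_energy \<Psi>0 = 0")
  case True
  have "limsup (\<lambda>t. ereal (probX ((grover ^^ t) \<Psi>0) j)) = 0" for j
    using probX_tendsto_zero[OF assms(1) True, of j]
    by (intro lim_imp_Limsup) (simp_all add: zero_ereal_def tendsto_ereal)
  with True show ?thesis by (simp add: perp_Gamma_iff[OF assms(1)])
next
  case False
  then have "0 < ereal (cycle_energy \<Psi>0 / 2)"
    by (simp add: cycle_energy_def order_le_neq_trans sum_nonneg)
  also have "\<dots> \<le> limsup (\<lambda>t. ereal (probX ((grover ^^ t) \<Psi>0) 0))"
  proof (intro le_Limsup always_eventually allI)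
    fix t
    show "ereal (cycle_energy \<Psi>0 / 2) \<le> ereal (probX ((grover ^^ t) \<Psi>0) 0)"
      using cycle_energy_le_probX[of "(grover ^^ t) \<Psi>0"] by (simp add: cycle_energy_walk)
  qed simp
  finally show ?thesis using False by (auto simp: perp_Gamma_iff[OF assms(1)])
qed

end
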